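(* For $\tilde\varphi=\mathrm{Id}+f\in\widetilde{\operatorname{Diff}}(S^1)$ define $R(\tilde\varphi)=2(\tilde\varphi')^{1/2}e^{i(\tilde\varphi-\mathrm{Id})/2}=2(1+f')^{1/2}e^{if/2}\in C^\infty_{2\pi\text{-per}}(\mathbb R,\mathbb C)$. Then $T_{\tilde\varphi}R.h=(\tilde\varphi')^{-1/2}h'e^{if/2}+i(\tilde\varphi')^{1/2}e^{if/2}h$, and for tangent vectors $h=X_1\circ\tilde\varphi$, $k=X_2\circ\tilde\varphi$ (with $X_1,X_2$ smooth $2\pi$-periodic) $$\operatorname{Re}\int_0^{2\pi}T_{\tilde\varphi}R.h\ \overline{T_{\tilde\varphi}R.k}\,dx=\int_0^{2\pi}\big(X_1X_2+X_1'X_2'\big)\,dx,$$ i.e. the pullback under $R$ of the $L^2$ inner product on $C^\infty_{2\pi\text{-per}}(\mathbb R,\mathbb C)$ is the right-invariant Sobolev $H^1$-metric.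
   Context: $\widetilde{\operatorname{Diff}}(S^1)$ is the group of lifts $\tilde\varphi(x)=x+f(x)$, $f\in C^\infty(\mathbb R)$ $2\pi$-periodic with $f'>-1$, of orientation-preserving smooth diffeomorphisms $\varphi$ of $S^1$ via $\varphi(e^{ix})=e^{i\tilde\varphi(x)}$; tangent vectors at $\tilde\varphi$ are $2\pi$-periodic smooth functions $h$ (variations of $f$), written $h=X\circ\tilde\varphi$. The right-invariant $H^1$-metric is $G_\varphi(X\circ\varphi,Y\circ\varphi)=\int (XY+X'Y')\,dx$ over one period. *)

theory Defs
  imports "HOL-Analysis.Analysis"
begin

definition smooth_fun :: "(real \<Rightarrow> real) \<Rightarrow> bool" where
  "smooth_fun g \<longleftrightarrow> (\<forall>n x. ((deriv ^^ n) g) differentiable (at x))"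

definition periodic_2pi :: "(real \<Rightarrow> 'b) \<Rightarrow> bool" where
  "periodic_2pi g \<longleftrightarrow> (\<forall>x. g (x + 2 * pi) = g x)"

text \<open>The lift phi = Id + f of an element of the universal cover of Diff(S^1).\<close>
definition lift_diff :: "(real \<Rightarrow> real) \<Rightarrow> bool" where
  "lift_diff f \<longleftrightarrow> smooth_fun f \<and> periodic_2pi f \<and> (\<forall>x. deriv f x > -1)"

definition R_map :: "(real \<Rightarrow> real) \<Rightarrow> real \<Rightarrow> complex" where
  "R_map f x = 2 * complex_of_real (sqrt (1 + deriv f x)) * cis (f x / 2)"

definition TR :: "(real \<Rightarrow> real) \<Rightarrow> (real \<Rightarrow> real) \<Rightarrow> real \<Rightarrow> complex" where
  "TR f h x = complex_of_real (1 / sqrt (1 + deriv f x) * deriv h x) * cis (f x / 2)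
             + \<i> * complex_of_real (sqrt (1 + deriv f x)) * cis (f x / 2) * complex_of_real (h x)"

end

theory Submission
  imports Defs
begin

(* Tangent map: for fixed x, t |-> R(f + t h)(x) is a product of t |-> 2 sqrt(1 + f' + t h')
   and t |-> cis((f + t h)/2); the product rule at t = 0 gives TR f h x.

   Inner product: writing s = sqrt(phi'), a direct computation gives
   Re (TR f h * cnj (TR f k)) = h' k' / s^2 + s^2 h k.  For h = X1 o phi, k = X2 o phi the chain
   rule h' = (X1' o phi) phi' turns this into phi' * (G o phi) with G = X1 X2 + X1' X2'.  The
   substitution y = phi(x) maps [0, 2 pi] onto [f 0, f 0 + 2 pi], and since G is 2 pi-periodic
   its integral over any interval of length 2 pi equals the integral over [0, 2 pi]. *)

lemma smooth_fun_has_deriv: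
  "smooth_fun g \<Longrightarrow> (g has_real_derivative deriv g x) (at x)"
  unfolding smooth_fun_def by (metis funpow_0 DERIV_deriv_iff_real_differentiable)

lemma smooth_fun_differentiable: "smooth_fun g \<Longrightarrow> g differentiable (at x)"
  using smooth_fun_has_deriv real_differentiable_def by blast

lemma smooth_fun_deriv_differentiable:
  "smooth_fun g \<Longrightarrow> deriv g differentiable (at x)"
  unfolding smooth_fun_def by (metis funpow_0 funpow_Suc_right o_apply)

lemma smooth_fun_continuous_on: "smooth_fun g \<Longrightarrow> continuous_on S g"
  by (meson continuous_at_imp_continuous_on differentiable_imp_continuous_within
      smooth_fun_differentiable)

lemma smooth_fun_deriv_continuous_on: "smooth_fun g \<Longrightarrow> continuous_on S (deriv g)"
  by (meson continuous_at_imp_continuous_on differentiable_imp_continuous_within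
      smooth_fun_deriv_differentiable)

lemma deriv_periodic:
  fixes X :: "real \<Rightarrow> real"
  assumes diff: "\<And>x. X differentiable (at x)" and per: "\<And>x. X (x + p) = X x"
  shows "deriv X (x + p) = deriv X x"
proof -
  have "((\<lambda>y. X (y + p)) has_real_derivative deriv X (x + p) * 1) (at x)"
    by (rule DERIV_chain2[of X]) (auto intro!: derivative_eq_intros
        simp: DERIV_deriv_iff_real_differentiable diff)
  then have "(X has_real_derivative deriv X (x + p)) (at x)"
    using per by simp
  then show ?thesis
    using DERIV_unique diff DERIV_deriv_iff_real_differentiable by blast
qed

text \<open>The integral of a continuous p-periodic function over an interval of length p does
  not depend on the position of the interval: as a function of b it has derivative
  G (b + p) - G b = 0.  A base point c below all intervals involved lets us express it as a
  difference of indefinite integrals.\<close>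

lemma integral_periodic_shift:
  fixes G :: "real \<Rightarrow> real"
  assumes cont: "continuous_on UNIV G" and per: "\<And>x. G (x + p) = G x" and "p \<ge> 0"
  shows "integral {b..b+p} G = integral {0..p} G"
proof -
  define c where "c = - \<bar>b\<bar>"
  define M where "M = \<bar>b\<bar>"
  define Q where "Q = (\<lambda>t. integral {c..t+p} G - integral {c..t} G)"
  have indef: "((\<lambda>t. integral {c..t} G) has_real_derivative G t) (at t within {c..M+p})"
    if "t \<in> {c..M+p}" for t
    by (intro integral_has_real_derivative continuous_on_subset[OF cont] that) auto
  have dQ: "(Q has_real_derivative G (t + p) * 1 - G t) (at t within {c..M})"
    if "t \<in> {c..M}" for t
  proof -
    have shifted: "((\<lambda>t. integral {c..t} G) \<circ> (\<lambda>t. t + p) has_real_derivative G (t + p) * 1)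
        (at t within {c..M})"
      using that \<open>p \<ge> 0\<close>
      by (intro DERIV_image_chain DERIV_subset[OF indef]) (auto intro!: derivative_eq_intros)
    have "((\<lambda>t. integral {c..t} G) has_real_derivative G t) (at t within {c..M})"
      using that \<open>p \<ge> 0\<close> by (intro DERIV_subset[OF indef]) auto
    with shifted show ?thesis
      unfolding Q_def by (auto simp: o_def intro: DERIV_diff)
  qed
  obtain q where q: "\<And>t. t \<in> {c..M} \<Longrightarrow> Q t = q"
    using has_field_derivative_zero_constant[of "{c..M}" Q] dQ per by force
  have Q_eq: "Q t = integral {t..t+p} G" if "c \<le> t" for t
  proof -
    have "integral {c..t} G + integral {t..t+p} G = integral {c..t+p} G"
      using that \<open>p \<ge> 0\<close>
      by (intro Henstock_Kurzweil_Integration.integral_combine integrable_continuous_real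
          continuous_on_subset[OF cont]) auto
    then show ?thesis
      unfolding Q_def by simp
  qed
  have in_range: "b \<in> {c..M}" "0 \<in> {c..M}" by (auto simp: c_def M_def)
  have "integral {b..b+p} G = Q b" using Q_eq by (simp add: c_def)
  also have "\<dots> = Q 0" using q[OF in_range(1)] q[OF in_range(2)] by simp
  also have "\<dots> = integral {0..p} G" using Q_eq by (simp add: c_def)
  finally show ?thesis .
qed

lemma integral_monotone_substitution:
  fixes g g' G :: "real \<Rightarrow> real"
  assumes "a \<le> b" and g: "\<And>x. (g has_real_derivative g' x) (at x)" and "\<And>x. g' x \<ge> 0"
    and cont: "continuous_on {g a..g b} G"
  shows "integral {a..b} (\<lambda>x. g' x * G (g x)) = integral {g a..g b} G"
proof -
  have mono: "g u \<le> g w" if "u \<le> w" for u w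
    using DERIV_nonneg_imp_nondecreasing[OF that] g assms(3) by blast
  have "((\<lambda>x. g' x *\<^sub>R G (g x)) has_integral integral {g a..g b} G) {a..b}"
    using \<open>a \<le> b\<close> mono
    by (intro has_integral_substitution[OF _ _ _ cont] DERIV_subset[OF g]) auto
  then show ?thesis
    by (simp add: integral_unique)
qed

text \<open>Change of variables y = x + f x along the lift of a circle diffeomorphism: it maps
  [0, 2 pi] onto [f 0, f 0 + 2 pi], which for a 2 pi-periodic integrand is as good as
  [0, 2 pi].\<close>

lemma integral_lift_substitution:
  fixes G :: "real \<Rightarrow> real"
  assumes f: "lift_diff f" and cont: "continuous_on UNIV G" and per: "periodic_2pi G"
  shows "integral {0..2*pi} (\<lambda>x. (1 + deriv f x) * G (x + f x)) = integral {0..2*pi} G"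
proof -
  have sm: "smooth_fun f" and per_f: "f (2*pi) = f 0" and pos: "\<And>x. deriv f x > -1"
    using f unfolding lift_diff_def periodic_2pi_def by (metis add_0)+
  have "integral {0..2*pi} (\<lambda>x. (1 + deriv f x) * G (x + f x))
      = integral {0 + f 0..2*pi + f (2*pi)} G"
  proof (rule integral_monotone_substitution[of _ _ "\<lambda>x. x + f x"])
    show "((\<lambda>x. x + f x) has_real_derivative 1 + deriv f x) (at x)" for x
      by (auto intro!: derivative_eq_intros smooth_fun_has_deriv[OF sm])
    show "0 \<le> 1 + deriv f x" for x
      using pos[of x] by linarith
  qed (use continuous_on_subset[OF cont] in auto)
  also have "\<dots> = integral {0..2*pi} G"
    using integral_periodic_shift[OF cont, of "2*pi" "f 0"] per per_f
    unfolding periodic_2pi_def by (simp add: add.commute)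
  finally show ?thesis .
qed

lemma deriv_comp_lift:
  assumes "smooth_fun X" "smooth_fun f"
  shows "((\<lambda>x. X (x + f x)) has_real_derivative deriv X (x + f x) * (1 + deriv f x)) (at x)"
  by (rule DERIV_chain2[OF smooth_fun_has_deriv[OF assms(1)]])
    (auto intro!: derivative_eq_intros smooth_fun_has_deriv[OF assms(2)])

lemma R_map_tangent:
  assumes f: "f differentiable (at x)" and h: "h differentiable (at x)"
    and pos: "deriv f x > -1"
  shows "((\<lambda>t. R_map (\<lambda>y. f y + t * h y) x) has_vector_derivative TR f h x) (at 0)"
proof -
  define a where "a = deriv f x"
  define b where "b = deriv h x"
  have "deriv (\<lambda>y. f y + t * h y) x = a + t * b" for t
    unfolding a_def b_def using f h
    by (intro DERIV_imp_deriv DERIV_add DERIV_cmult) (auto simp: DERIV_deriv_iff_real_differentiable)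
  then have R_eq: "(\<lambda>t. R_map (\<lambda>y. f y + t * h y) x)
      = (\<lambda>t. 2 * complex_of_real (sqrt (1 + (a + t * b))) * cis ((f x + t * h x) / 2))"
    by (auto simp: R_map_def)
  have "1 + a > 0" using pos by (simp add: a_def)
  then have sqrt_part: "((\<lambda>t. sqrt (1 + (a + t * b))) has_real_derivative
      inverse (sqrt (1 + a)) / 2 * b) (at 0)"
    by (intro DERIV_chain2[of sqrt, OF _ ]) (auto intro!: derivative_eq_intros DERIV_real_sqrt)
  have "((\<lambda>t. (f x + t * h x) / 2) has_derivative (\<lambda>t. t * (h x / 2))) (at 0)"
    by (auto intro!: derivative_eq_intros simp: field_simps)
  from has_derivative_cis[OF this]
  have cis_part: "((\<lambda>t. cis ((f x + t * h x) / 2)) has_vector_derivative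
      (h x / 2) *\<^sub>R (\<i> * cis (f x / 2))) (at 0)"
    unfolding has_vector_derivative_def by (simp add: scaleR_conv_of_real mult.assoc)
  have "((\<lambda>t. 2 * complex_of_real (sqrt (1 + (a + t * b))) * cis ((f x + t * h x) / 2))
      has_vector_derivative TR f h x) (at 0)"
    by (rule has_vector_derivative_eq_rhs[OF has_vector_derivative_mult[OF
          has_vector_derivative_mult_right[OF has_vector_derivative_of_real[OF sqrt_part]] cis_part]])
      (use \<open>1 + a > 0\<close> in \<open>simp add: TR_def a_def[symmetric] b_def[symmetric]
        scaleR_conv_of_real field_simps\<close>)
  then show ?thesis
    unfolding R_eq .
qed

text \<open>The pointwise algebraic identity behind the isometry: the common phase cis th cancels
  and the cross terms are purely imaginary.\<close>

lemma Re_tangent_product: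
  fixes b c u v th s :: real
  assumes "s > 0"
  shows "Re ((complex_of_real (1/s * b) * cis th + \<i> * complex_of_real s * cis th * complex_of_real u)
     * cnj (complex_of_real (1/s * c) * cis th + \<i> * complex_of_real s * cis th * complex_of_real v))
     = b*c/s^2 + s^2 * u * v"
proof -
  have cos_sq: "cos th * cos th = 1 - sin th * sin th"
    using sin_cos_squared_add[of th] by (simp add: power2_eq_square)
  show ?thesis
    using assms by (simp add: field_simps power2_eq_square cos_sq)
qed

lemma Re_TR_product_pullback:
  assumes f: "smooth_fun f" "deriv f x > -1" and X: "smooth_fun X1" "smooth_fun X2"
  shows "Re (TR f (\<lambda>x. X1 (x + f x)) x * cnj (TR f (\<lambda>x. X2 (x + f x)) x))
       = (1 + deriv f x) * (X1 (x + f x) * X2 (x + f x)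
           + deriv X1 (x + f x) * deriv X2 (x + f x))"
proof -
  have pos: "1 + deriv f x > 0" using f(2) by simp
  have "Re (TR f (\<lambda>x. X1 (x + f x)) x * cnj (TR f (\<lambda>x. X2 (x + f x)) x))
      = deriv (\<lambda>x. X1 (x + f x)) x * deriv (\<lambda>x. X2 (x + f x)) x / (sqrt (1 + deriv f x))^2
        + (sqrt (1 + deriv f x))^2 * X1 (x + f x) * X2 (x + f x)"
    unfolding TR_def using pos by (intro Re_tangent_product) simp
  also have "\<dots> = (1 + deriv f x) * (X1 (x + f x) * X2 (x + f x)
           + deriv X1 (x + f x) * deriv X2 (x + f x))"
    using pos by (simp add: DERIV_imp_deriv[OF deriv_comp_lift[OF X(1) f(1)]]
        DERIV_imp_deriv[OF deriv_comp_lift[OF X(2) f(1)]] field_simps power2_eq_square)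
  finally show ?thesis .
qed

text \<open>The tangent vector field TR f (X o phi) is continuous, so the complex integral in the
  theorem exists and commutes with taking real parts.\<close>

lemma TR_lift_continuous:
  assumes f: "smooth_fun f" "\<And>x. deriv f x > -1" and X: "smooth_fun X"
  shows "continuous_on S (TR f (\<lambda>x. X (x + f x)))"
proof -
  have TR_eq: "TR f (\<lambda>x. X (x + f x)) = (\<lambda>x.
      complex_of_real (1 / sqrt (1 + deriv f x) * (deriv X (x + f x) * (1 + deriv f x))) * cis (f x / 2)
      + \<i> * complex_of_real (sqrt (1 + deriv f x)) * cis (f x / 2) * complex_of_real (X (x + f x)))"
    unfolding TR_def[abs_def] by (simp add: DERIV_imp_deriv[OF deriv_comp_lift[OF X f(1)]])
  have cont_lift: "continuous_on S (\<lambda>x. x + f x)"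
    by (intro continuous_intros smooth_fun_continuous_on[OF f(1)])
  have cont_X: "continuous_on S (\<lambda>x. X (x + f x))"
    by (rule continuous_on_compose2[OF smooth_fun_continuous_on[OF X] cont_lift]) auto
  have cont_dX: "continuous_on S (\<lambda>x. deriv X (x + f x))"
    by (rule continuous_on_compose2[OF smooth_fun_deriv_continuous_on[OF X] cont_lift]) auto
  have "sqrt (1 + deriv f x) \<noteq> 0" for x
    using f(2)[of x] by simp
  then show ?thesis
    unfolding TR_eq
    by (intro continuous_intros cont_X cont_dX smooth_fun_continuous_on[OF f(1)]
        smooth_fun_deriv_continuous_on[OF f(1)]) auto
qed

theorem mainTheorem14:
  fixes f X1 X2 :: "real \<Rightarrow> real"
  assumes "lift_diff f"
    and "smooth_fun X1" and "periodic_2pi X1"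
    and "smooth_fun X2" and "periodic_2pi X2"
  defines "h \<equiv> (\<lambda>x. X1 (x + f x))"
    and "k \<equiv> (\<lambda>x. X2 (x + f x))"
  shows "(\<forall>x. ((\<lambda>t. R_map (\<lambda>y. f y + t * h y) x) has_vector_derivative TR f h x) (at 0))
       \<and> Re (integral {0..2*pi} (\<lambda>x. TR f h x * cnj (TR f k x)))
         = integral {0..2*pi} (\<lambda>x. X1 x * X2 x + deriv X1 x * deriv X2 x)"
proof -
  have f: "smooth_fun f" "\<And>x. deriv f x > -1"
    using assms(1) unfolding lift_diff_def by auto
  define G where "G = (\<lambda>y. X1 y * X2 y + deriv X1 y * deriv X2 y)"
  have contG: "continuous_on UNIV G"
    unfolding G_def by (intro continuous_intros smooth_fun_continuous_on
        smooth_fun_deriv_continuous_on assms(2,4))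
  have perG: "periodic_2pi G"
    using assms(3,5) deriv_periodic[OF smooth_fun_differentiable[OF assms(2)]]
      deriv_periodic[OF smooth_fun_differentiable[OF assms(4)]]
    unfolding G_def periodic_2pi_def by simp
  have "(\<lambda>x. TR f h x * cnj (TR f k x)) integrable_on {0..2*pi}"
    unfolding h_def k_def
    by (intro integrable_continuous_real continuous_intros TR_lift_continuous f assms(2,4))
  then have "Re (integral {0..2*pi} (\<lambda>x. TR f h x * cnj (TR f k x)))
      = integral {0..2*pi} (\<lambda>x. Re (TR f h x * cnj (TR f k x)))"
    by (rule integral_linear[OF _ bounded_linear_Re, unfolded o_def, symmetric])
  also have "\<dots> = integral {0..2*pi} (\<lambda>x. (1 + deriv f x) * G (x + f x))"
    unfolding h_def k_def G_def
    by (intro integral_cong Re_TR_product_pullback f assms(2,4))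
  also have "\<dots> = integral {0..2*pi} G"
    by (rule integral_lift_substitution[OF assms(1) contG perG])
  finally have isometry:
    "Re (integral {0..2*pi} (\<lambda>x. TR f h x * cnj (TR f k x))) = integral {0..2*pi} G" .
  have "h differentiable (at x)" for x
    unfolding h_def real_differentiable_def using deriv_comp_lift[OF assms(2) f(1)] by blast
  then have "\<forall>x. ((\<lambda>t. R_map (\<lambda>y. f y + t * h y) x) has_vector_derivative TR f h x) (at 0)"
    using R_map_tangent[OF smooth_fun_differentiable[OF f(1)] _ f(2)] by blast
  with isometry show ?thesis
    unfolding G_def by simp
qed

end
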